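(* Let $d\ge 2$ and $k$ be integers with $1\le k\le d-1$, and let $\delta>0$. Then the function $F:\mathbb{R}^d\to\mathbb{R}^d$ defined by $$F({\bm{x}})=\mathrm{Huber}\big(\mathrm{StatTop}_k({\bm{x}});\delta\big)/\delta$$ (with $\mathrm{Huber}(\cdot;\delta)$ applied entrywise) is continuously differentiable.
   Context: For ${\bm{x}}\in\mathbb{R}^d$, let $\mathrm{mean}({\bm{x}})=\frac1d\sum_{i=1}^d x_i$ and $\mathrm{std}({\bm{x}})=\sqrt{\frac{1}{d-1}\sum_{i=1}^d (x_i-\mathrm{mean}({\bm{x}}))^2}$, and let $Q$ be the quantile function (inverse CDF) of the standard Gaussian distribution. Define the threshold $\theta({\bm{x}},k)=\mathrm{mean}({\bm{x}})+\mathrm{std}({\bm{x}})\cdot Q(1-\frac{k}{d})$. The soft-thresholding operator is $\mathrm{SoftThreshold}({\bm{x}},\theta)=\max\{{\bm{x}}-\theta\mathbf{1},\mathbf{0}\}\in\mathbb{R}^d$ (entrywise maximum, $\mathbf{1}$ the all-ones vector), and the statistical top-$k$ operator is $\mathrm{StatTop}_k({\bm{x}})=\mathrm{SoftThreshold}({\bm{x}},\theta({\bm{x}},k))$. The Huber function is, for a scalar $x$, $\mathrm{Huber}(x;\delta)=\frac12 x^2$ if $|x|<\delta$ and $\mathrm{Huber}(x;\delta)=\delta(|x|-\frac12\delta)$ otherwise. *)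

theory Defs
  imports "HOL-Probability.Probability"
begin

definition gauss_cdf :: "real \<Rightarrow> real" where
  "gauss_cdf x = (LBINT t:{..x}. std_normal_density t)"

definition gauss_quantile :: "real \<Rightarrow> real" where
  "gauss_quantile p = (THE x. gauss_cdf x = p)"

definition vmean :: "real ^ 'n \<Rightarrow> real" where
  "vmean x = (\<Sum>i\<in>UNIV. x $ i) / real CARD('n)"

definition vstd :: "real ^ 'n \<Rightarrow> real" where
  "vstd x = sqrt ((\<Sum>i\<in>UNIV. (x $ i - vmean x)\<^sup>2) / (real CARD('n) - 1))"

definition stat_threshold :: "real ^ 'n \<Rightarrow> nat \<Rightarrow> real" where
  "stat_threshold x k = vmean x + vstd x * gauss_quantile (1 - real k / real CARD('n))"

definition soft_threshold :: "real ^ 'n \<Rightarrow> real \<Rightarrow> real ^ 'n" where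
  "soft_threshold x \<theta> = (\<chi> i. max (x $ i - \<theta>) 0)"

definition stat_top :: "nat \<Rightarrow> real ^ 'n \<Rightarrow> real ^ 'n" where
  "stat_top k x = soft_threshold x (stat_threshold x k)"

definition huber :: "real \<Rightarrow> real \<Rightarrow> real" where
  "huber \<delta> x = (if \<bar>x\<bar> < \<delta> then x\<^sup>2 / 2 else \<delta> * (\<bar>x\<bar> - \<delta> / 2))"

definition C1_everywhere :: "('a::real_normed_vector \<Rightarrow> 'b::real_normed_vector) \<Rightarrow> bool" where
  "C1_everywhere f \<longleftrightarrow> (\<exists>f'. (\<forall>x. (f has_derivative blinfun_apply (f' x)) (at x)) \<and> continuous_on UNIV f')"

end

(* Subtracting the mean is a linear map P, and the standard deviation is a constant multiple of
   the norm of P x. Hence output coordinate i is g (y $ i - c * norm y) with y = P x and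
   g t = Huber (max t 0; delta) / delta. The scalar g is C1 with derivative
   min (max t 0) delta / delta, which vanishes for t <= 0. Away from y = 0 the chain rule applies;
   at y = 0, where the norm is not differentiable, the argument of g is O(norm y) and g is flat
   at 0, so the derivative is 0 there and the derivative field tends to 0. *)

theory Submission
  imports Defs
begin

lemma has_derivative_compose_flat:
  fixes \<phi> :: "'a::real_normed_vector \<Rightarrow> real"
  assumes g: "(g has_real_derivative 0) (at 0)"
    and \<phi>0: "\<phi> 0 = 0" and \<phi>_bound: "\<And>h. \<bar>\<phi> h\<bar> \<le> K * norm h"
  shows "((\<lambda>h. g (\<phi> h)) has_derivative (\<lambda>_. 0)) (at 0)"
proof -
  \<comment> \<open>The difference quotient of g at 0; r 0 = 0 because x / 0 = 0, so r is continuous at 0.\<close>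
  define r where "r s = (g s - g 0) / s" for s
  have r0: "r 0 = 0"
    by (simp add: r_def)
  have "(r \<longlongrightarrow> r 0) (at 0)"
    using g unfolding has_field_derivative_iff r_def by simp
  moreover have "(\<phi> \<longlongrightarrow> 0) (at 0)"
  proof (rule Lim_null_comparison)
    show "\<forall>\<^sub>F h in at 0. norm (\<phi> h) \<le> K * norm h"
      using \<phi>_bound by simp
    show "((\<lambda>h. K * norm h) \<longlongrightarrow> 0) (at (0::'a))"
      by (intro tendsto_mult_right_zero tendsto_norm_zero tendsto_ident_at)
  qed
  ultimately have "((\<lambda>h. \<bar>r (\<phi> h)\<bar> * K) \<longlongrightarrow> \<bar>r 0\<bar> * K) (at 0)"
    by (intro tendsto_intros isCont_tendsto_compose[of 0 r]) (auto simp: isCont_def)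
  then have r_lim: "((\<lambda>h. \<bar>r (\<phi> h)\<bar> * K) \<longlongrightarrow> 0) (at 0)"
    by (simp add: r0)
  have "(\<lambda>h. norm (g (\<phi> (0 + h)) - g (\<phi> 0) - 0) / norm h) \<midarrow>0\<rightarrow> 0"
  proof (rule Lim_null_comparison[OF always_eventually r_lim], intro allI)
    fix h :: 'a
    have "g (\<phi> h) - g 0 = r (\<phi> h) * \<phi> h"
      by (cases "\<phi> h = 0") (auto simp: r_def)
    then have "\<bar>g (\<phi> h) - g 0\<bar> \<le> \<bar>r (\<phi> h)\<bar> * (K * norm h)"
      by (simp add: abs_mult mult_left_mono \<phi>_bound)
    then show "norm (norm (g (\<phi> (0 + h)) - g (\<phi> 0) - 0) / norm h) \<le> \<bar>r (\<phi> h)\<bar> * K"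
      by (cases "h = 0") (auto simp: \<phi>0 r0 divide_le_eq)
  qed
  then show ?thesis
    unfolding has_derivative_at by simp
qed

lemma has_real_derivative_split:
  assumes "(f has_real_derivative D) (at a within {..a})"
    and "(f has_real_derivative D) (at a within {a..})"
  shows "(f has_real_derivative D) (at a)"
proof -
  have "((\<lambda>y. (f y - f a) / (y - a)) \<longlongrightarrow> D) (at a within {..a} \<union> {a..})"
    using assms unfolding has_field_derivative_iff by (simp add: Lim_within_Un)
  moreover have "{..a} \<union> {a..} = (UNIV :: real set)"
    by auto
  ultimately show ?thesis
    by (simp add: has_field_derivative_iff)
qed

lemma norm_blinfun_inner_left_le: "norm (blinfun_inner_left x) \<le> norm x"
proof (rule norm_blinfun_bound)
  show "norm (blinfun_inner_left x y) \<le> norm x * norm y" for y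
    using Cauchy_Schwarz_ineq2[of y x] by (simp add: mult.commute)
qed simp

lemma C1_everywhere_compose_linear_minus_norm:
  fixes L :: "'a::real_inner \<Rightarrow>\<^sub>L real" and c :: real
  assumes g: "\<And>t. (g has_real_derivative g' t) (at t)"
    and g'_cont: "continuous_on UNIV g'" and g'0: "g' 0 = 0"
  shows "C1_everywhere (\<lambda>y. g (L y - c * norm y))"
proof -
  define \<phi> where "\<phi> y = L y - c * norm y" for y
  \<comment> \<open>The derivative of \<phi> at y \<noteq> 0; at y = 0 it is multiplied by g' (\<phi> 0) = 0.\<close>
  define D where "D y = L - c *\<^sub>R blinfun_inner_left (sgn y)" for y
  define K where "K = norm L + \<bar>c\<bar>"
  have \<phi>_bound: "\<bar>\<phi> y\<bar> \<le> K * norm y" for y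
  proof -
    have "\<bar>\<phi> y\<bar> \<le> \<bar>L y\<bar> + \<bar>c\<bar> * norm y"
      unfolding \<phi>_def using abs_triangle_ineq4[of "L y" "c * norm y"] by (simp add: abs_mult)
    also have "\<dots> \<le> K * norm y"
      using norm_blinfun[of L y] by (simp add: K_def distrib_right)
    finally show ?thesis .
  qed
  have D_bound: "norm (D y) \<le> K" for y
  proof -
    have "norm (D y) \<le> norm L + \<bar>c\<bar> * norm (blinfun_inner_left (sgn y))"
      unfolding D_def using norm_triangle_ineq4 by (metis norm_scaleR)
    moreover have "norm (blinfun_inner_left (sgn y)) \<le> 1"
      using norm_blinfun_inner_left_le[of "sgn y"] norm_sgn[of y] by (simp split: if_splits)
    ultimately show ?thesis
      using mult_left_le[of _ "\<bar>c\<bar>"] unfolding K_def by force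
  qed
  have \<phi>_cont: "isCont \<phi> y" for y
    unfolding \<phi>_def by (intro continuous_intros)
  have g'\<phi>_cont: "isCont (\<lambda>y. g' (\<phi> y)) y" for y
    using g'_cont by (intro isCont_o2[OF \<phi>_cont]) (simp add: continuous_on_eq_continuous_at)
  have deriv: "((\<lambda>y. g (\<phi> y)) has_derivative blinfun_apply (g' (\<phi> y) *\<^sub>R D y)) (at y)" for y
  proof (cases "y = 0")
    case False
    have "(\<phi> has_derivative (\<lambda>v. L v - c * (v \<bullet> sgn y))) (at y)"
      unfolding \<phi>_def
      by (intro has_derivative_diff has_derivative_mult_right has_derivative_norm[OF False]
          bounded_linear_imp_has_derivative blinfun.bounded_linear_right)
    from has_derivative_compose[OF this g[unfolded has_field_derivative_def]]
    show ?thesis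
      by (simp add: D_def scaleR_blinfun.rep_eq minus_blinfun.rep_eq)
  next
    case True
    have \<phi>0: "\<phi> 0 = 0"
      by (simp add: \<phi>_def)
    from has_derivative_compose_flat[OF _ \<phi>0 \<phi>_bound] g[of 0] show ?thesis
      by (simp add: True \<phi>0 g'0 zero_blinfun.rep_eq)
  qed
  have "isCont (\<lambda>y. g' (\<phi> y) *\<^sub>R D y) y" for y
  proof (cases "y = 0")
    case False
    then show ?thesis
      unfolding D_def by (intro continuous_intros g'\<phi>_cont) auto
  next
    case True
    have "((\<lambda>y. \<bar>g' (\<phi> y)\<bar> * K) \<longlongrightarrow> \<bar>g' (\<phi> 0)\<bar> * K) (at 0)"
      using g'\<phi>_cont[of 0] by (intro tendsto_intros) (simp add: isCont_def)
    then have "((\<lambda>y. \<bar>g' (\<phi> y)\<bar> * K) \<longlongrightarrow> 0) (at 0)"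
      by (simp add: \<phi>_def g'0)
    then have "((\<lambda>y. g' (\<phi> y) *\<^sub>R D y) \<longlongrightarrow> 0) (at 0)"
      by (rule Lim_null_comparison[OF always_eventually, rotated]) (simp add: D_bound mult_left_mono)
    then show ?thesis
      using True by (simp add: isCont_def \<phi>_def g'0)
  qed
  then have "continuous_on UNIV (\<lambda>y. g' (\<phi> y) *\<^sub>R D y)"
    by (simp add: continuous_at_imp_continuous_on)
  with deriv show ?thesis
    unfolding C1_everywhere_def \<phi>_def[symmetric] by (intro exI[of _ "\<lambda>y. g' (\<phi> y) *\<^sub>R D y"]) simp
qed

definition huber_relu :: "real \<Rightarrow> real \<Rightarrow> real" where
  "huber_relu \<delta> t = huber \<delta> (max t 0) / \<delta>"

definition huber_relu_deriv :: "real \<Rightarrow> real \<Rightarrow> real" where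
  "huber_relu_deriv \<delta> t = min (max t 0) \<delta> / \<delta>"

lemma huber_relu_eq:
  assumes "\<delta> > 0"
  shows "huber_relu \<delta> t = (if t \<le> 0 then 0 else if t \<le> \<delta> then t\<^sup>2 / (2 * \<delta>) else t - \<delta> / 2)"
  using assms by (auto simp: huber_relu_def huber_def field_simps power2_eq_square)

lemma has_real_derivative_huber_relu:
  assumes \<delta>: "\<delta> > 0"
  shows "(huber_relu \<delta> has_real_derivative huber_relu_deriv \<delta> t) (at t)"
proof -
  have zero: "((\<lambda>_. 0) has_real_derivative huber_relu_deriv \<delta> t) (at t within S)" if "t \<le> 0" for S
    using that \<delta> by (simp add: huber_relu_deriv_def)
  have quadratic: "((\<lambda>y. y\<^sup>2 / (2 * \<delta>)) has_real_derivative huber_relu_deriv \<delta> t) (at t within S)"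
    if "0 \<le> t" "t \<le> \<delta>" for S
    using that \<delta> by (auto intro!: derivative_eq_intros simp: huber_relu_deriv_def)
  have linear: "((\<lambda>y. y - \<delta> / 2) has_real_derivative huber_relu_deriv \<delta> t) (at t within S)"
    if "\<delta> \<le> t" for S
    using that \<delta> by (auto intro!: derivative_eq_intros simp: huber_relu_deriv_def)
  consider "t < 0" | "t = 0" | "0 < t" "t < \<delta>" | "t = \<delta>" | "\<delta> < t"
    by linarith
  then show ?thesis
  proof cases
    case 1
    from zero[of UNIV] show ?thesis
      by (rule has_field_derivative_transform_within_open[where S="{..<0}"])
        (use 1 \<delta> in \<open>auto simp: huber_relu_eq\<close>)
  next
    case 2
    show ?thesis
    proof (rule has_real_derivative_split)
      show "(huber_relu \<delta> has_real_derivative huber_relu_deriv \<delta> t) (at t within {..t})"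
        by (rule has_field_derivative_transform_within[OF zero zero_less_one])
          (use 2 \<delta> in \<open>auto simp: huber_relu_eq\<close>)
      show "(huber_relu \<delta> has_real_derivative huber_relu_deriv \<delta> t) (at t within {t..})"
        by (rule has_field_derivative_transform_within[OF quadratic \<delta>])
          (use 2 \<delta> in \<open>auto simp: huber_relu_eq dist_real_def\<close>)
    qed
  next
    case 3
    from quadratic[of UNIV] show ?thesis
      by (rule has_field_derivative_transform_within_open[where S="{0<..<\<delta>}"])
        (use 3 \<delta> in \<open>auto simp: huber_relu_eq\<close>)
  next
    case 4
    show ?thesis
    proof (rule has_real_derivative_split)
      show "(huber_relu \<delta> has_real_derivative huber_relu_deriv \<delta> t) (at t within {..t})"
        by (rule has_field_derivative_transform_within[OF quadratic \<delta>])
          (use 4 \<delta> in \<open>auto simp: huber_relu_eq dist_real_def power2_eq_square\<close>)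
      show "(huber_relu \<delta> has_real_derivative huber_relu_deriv \<delta> t) (at t within {t..})"
        by (rule has_field_derivative_transform_within[OF linear zero_less_one])
          (use 4 \<delta> in \<open>auto simp: huber_relu_eq power2_eq_square\<close>)
    qed
  next
    case 5
    from linear[of UNIV] show ?thesis
      by (rule has_field_derivative_transform_within_open[where S="{\<delta><..}"])
        (use 5 \<delta> in \<open>auto simp: huber_relu_eq\<close>)
  qed
qed

lemma continuous_on_huber_relu_deriv: "continuous_on UNIV (huber_relu_deriv \<delta>)"
  unfolding huber_relu_deriv_def divide_inverse by (intro continuous_intros)

lemma huber_relu_deriv_0: "\<delta> \<ge> 0 \<Longrightarrow> huber_relu_deriv \<delta> 0 = 0"
  by (simp add: huber_relu_deriv_def)

lemma C1_everywhere_compose_blinfun: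
  assumes "C1_everywhere G"
  shows "C1_everywhere (\<lambda>x. G (blinfun_apply P x))"
proof -
  obtain G' where G': "\<And>y. (G has_derivative blinfun_apply (G' y)) (at y)" "continuous_on UNIV G'"
    using assms unfolding C1_everywhere_def by blast
  have "((\<lambda>x. G (P x)) has_derivative blinfun_apply (G' (P x) o\<^sub>L P)) (at x)" for x
    using has_derivative_compose[OF
        bounded_linear_imp_has_derivative[OF blinfun.bounded_linear_right] G'(1)]
    by (simp add: blinfun_compose.rep_eq comp_def)
  moreover have "continuous_on UNIV (\<lambda>x. G' (P x))"
    by (rule continuous_on_compose2[OF G'(2) linear_continuous_on[OF blinfun.bounded_linear_right]]) simp
  then have "continuous_on UNIV (\<lambda>x. G' (P x) o\<^sub>L P)"
    by (intro continuous_intros)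
  ultimately show ?thesis
    unfolding C1_everywhere_def by (intro exI conjI allI)
qed

lemma C1_everywhere_vec:
  fixes f :: "'a::real_normed_vector \<Rightarrow> real ^ 'n"
  assumes "\<And>i. C1_everywhere (\<lambda>x. f x $ i)"
  shows "C1_everywhere f"
proof -
  obtain f' where f': "\<And>i x. ((\<lambda>x. f x $ i) has_derivative blinfun_apply (f' i x)) (at x)"
    "\<And>i. continuous_on UNIV (f' i)"
    using assms unfolding C1_everywhere_def by metis
  have f_eq: "f = (\<lambda>x. \<Sum>i\<in>UNIV. (f x $ i) *\<^sub>R axis i 1)"
    by (simp add: fun_eq_iff basis_expansion flip: scalar_mult_eq_scaleR)
  have deriv_eq: "blinfun_apply (\<Sum>i\<in>UNIV. blinfun_scaleR_left (axis i 1) o\<^sub>L f' i x)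
      = (\<lambda>v. \<Sum>i\<in>UNIV. f' i x v *\<^sub>R axis i 1)" for x
    by (simp add: fun_eq_iff blinfun.sum_left)
  have "(f has_derivative blinfun_apply (\<Sum>i\<in>UNIV. blinfun_scaleR_left (axis i 1) o\<^sub>L f' i x)) (at x)" for x
    unfolding deriv_eq by (subst f_eq) (intro has_derivative_sum has_derivative_scaleR_left f'(1))
  moreover have "continuous_on UNIV (\<lambda>x. \<Sum>i\<in>UNIV. blinfun_scaleR_left (axis i 1) o\<^sub>L f' i x)"
    by (intro continuous_intros f'(2))
  ultimately show ?thesis
    unfolding C1_everywhere_def by (intro exI conjI allI)
qed

lemma bounded_linear_vmean: "bounded_linear (vmean :: real ^ 'n \<Rightarrow> real)"
  unfolding vmean_def[abs_def]
  by (intro bounded_linear_compose[OF bounded_linear_divide] bounded_linear_sum bounded_linear_vec_nth)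

definition centering :: "(real ^ 'n) \<Rightarrow>\<^sub>L (real ^ 'n)" where
  "centering = Blinfun (\<lambda>x. x - vmean x *\<^sub>R 1)"

lemma centering_apply:
  fixes x :: "real ^ 'n"
  shows "centering x = x - vmean x *\<^sub>R 1"
proof -
  have "bounded_linear (\<lambda>x :: real ^ 'n. x - vmean x *\<^sub>R 1)"
    by (intro bounded_linear_sub bounded_linear_ident bounded_linear_scaleR_left
        bounded_linear_compose[OF _ bounded_linear_vmean])
  then show ?thesis
    by (simp add: centering_def bounded_linear_Blinfun_apply)
qed

lemma vstd_eq_norm_centering:
  fixes x :: "real ^ 'n"
  shows "vstd x = norm (centering x) / sqrt (real CARD('n) - 1)"
proof -
  have "norm (centering x) = sqrt (\<Sum>j\<in>UNIV. (x $ j - vmean x)\<^sup>2)"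
    by (simp add: centering_apply norm_vec_def L2_set_def)
  then show ?thesis
    by (simp add: vstd_def real_sqrt_divide)
qed

lemma huber_stat_top_eq:
  fixes x :: "real ^ 'n"
  shows "huber \<delta> (stat_top k x $ i) / \<delta> =
     huber_relu \<delta> (centering x $ i - gauss_quantile (1 - real k / real CARD('n))
       / sqrt (real CARD('n) - 1) * norm (centering x))"
  unfolding huber_relu_def stat_top_def soft_threshold_def stat_threshold_def vstd_eq_norm_centering
  by (simp add: centering_apply algebra_simps)

theorem theorem2:
  fixes k :: nat and \<delta> :: real
  assumes "CARD('n::finite) \<ge> 2"
    and "1 \<le> k" and "k \<le> CARD('n) - 1"
    and "\<delta> > 0"
  shows "C1_everywhere (\<lambda>x :: real ^ 'n. \<chi> i. huber \<delta> (stat_top k x $ i) / \<delta>)"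
proof -
  define c where "c = gauss_quantile (1 - real k / real CARD('n)) / sqrt (real CARD('n) - 1)"
  have C1_coordinate:
    "C1_everywhere (\<lambda>y :: real ^ 'n. huber_relu \<delta> (blinfun_inner_left (axis i 1) y - c * norm y))"
    for i
    using assms(4)
    by (intro C1_everywhere_compose_linear_minus_norm[OF has_real_derivative_huber_relu
          continuous_on_huber_relu_deriv huber_relu_deriv_0]) auto
  have "C1_everywhere (\<lambda>x :: real ^ 'n. huber \<delta> (stat_top k x $ i) / \<delta>)" for i
    using C1_everywhere_compose_blinfun[OF C1_coordinate, of i centering]
    by (simp add: huber_stat_top_eq c_def inner_axis)
  then show ?thesis
    by (intro C1_everywhere_vec) simp
qed

end
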